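(* If $\mathcal{I}$ is an unboring ideal, then the ordinal $\omega^2+1$ with the order topology is in $\mathrm{FinBW}(\mathcal{I})$.
   Context: An ideal on an infinite countable set $X$ is a family $\mathcal{I}\subseteq\mathcal{P}(X)$ closed under subsets and finite unions, containing all finite subsets, with $X\notin\mathcal{I}$. A space $X$ is in $\mathrm{FinBW}(\mathcal{I})$ if $X$ is Hausdorff and for every sequence $(x_n)_{n\in\bigcup\mathcal{I}}$ in $X$ there is $A\notin\mathcal{I}$ with $(x_n)_{n\in A}$ convergent in $X$. $\mathrm{Fin}^2$: ideal on $\omega^2$ of all $A$ with only finitely many $n$ such that $\{m:(n,m)\in A\}$ is infinite. $\mathcal{BI}$: ideal on $\omega^3$ of all $A$ for which there is $k$ with $\{(j,l):(i,j,l)\in A\}\in\mathrm{Fin}^2$ for $i<k$ and finite for $i\ge k$. $\mathcal{I}\sqsubseteq\mathcal{J}$: there is a bijection $f:\bigcup\mathcal{J}\to\bigcup\mathcal{I}$ with $f^{-1}[A]\in\mathcal{J}$ for all $A\in\mathcal{I}$. $\mathcal{I}$ is unboring if $\mathcal{BI}\not\sqsubseteq\mathcal{I}$. *)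

theory Defs
  imports "HOL-Analysis.Analysis"
begin

definition ideal_on :: "'a set \<Rightarrow> 'a set set \<Rightarrow> bool" where
  "ideal_on X I \<longleftrightarrow> infinite X \<and> countable X \<and> (\<forall>A\<in>I. A \<subseteq> X)
     \<and> (\<forall>A\<in>I. \<forall>B. B \<subseteq> A \<longrightarrow> B \<in> I)
     \<and> (\<forall>A\<in>I. \<forall>B\<in>I. A \<union> B \<in> I)
     \<and> (\<forall>F. F \<subseteq> X \<longrightarrow> finite F \<longrightarrow> F \<in> I)
     \<and> X \<notin> I"

definition Fin2 :: "(nat \<times> nat) set set" where
  "Fin2 = {A. finite {n. infinite {m. (n, m) \<in> A}}}"

definition BI :: "(nat \<times> nat \<times> nat) set set" where
  "BI = {A. \<exists>k. \<forall>i. (i < k \<longrightarrow> {(j, l). (i, j, l) \<in> A} \<in> Fin2)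
                   \<and> (k \<le> i \<longrightarrow> finite {(j, l). (i, j, l) \<in> A})}"

definition ideal_below :: "'b set set \<Rightarrow> 'a set set \<Rightarrow> bool" where
  "ideal_below I J \<longleftrightarrow> (\<exists>f. bij_betw f (\<Union>J) (\<Union>I) \<and> (\<forall>A\<in>I. f -` A \<inter> \<Union>J \<in> J))"

definition unboring :: "'a set set \<Rightarrow> bool" where
  "unboring I \<longleftrightarrow> \<not> ideal_below BI I"

definition converges_on :: "'b topology \<Rightarrow> ('a \<Rightarrow> 'b) \<Rightarrow> 'a set \<Rightarrow> 'b \<Rightarrow> bool" where
  "converges_on T x A L \<longleftrightarrow> L \<in> topspace T \<and>
     (\<forall>U. openin T U \<longrightarrow> L \<in> U \<longrightarrow> finite {n \<in> A. x n \<notin> U})"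

definition FinBW :: "'a set set \<Rightarrow> 'b topology \<Rightarrow> bool" where
  "FinBW I T \<longleftrightarrow> Hausdorff_space T \<and>
     (\<forall>x. (\<forall>n\<in>\<Union>I. x n \<in> topspace T) \<longrightarrow>
        (\<exists>A. A \<subseteq> \<Union>I \<and> A \<notin> I \<and> (\<exists>L. converges_on T x A L)))"

text \<open>Pt a b stands for omega*a + b, Top for omega^2.\<close>
datatype w2p1 = Pt nat nat | Top

instantiation w2p1 :: linorder
begin

fun less_eq_w2p1 :: "w2p1 \<Rightarrow> w2p1 \<Rightarrow> bool" where
  "less_eq_w2p1 (Pt a b) (Pt c d) \<longleftrightarrow> a < c \<or> (a = c \<and> b \<le> d)"
| "less_eq_w2p1 _ Top \<longleftrightarrow> True"
| "less_eq_w2p1 Top (Pt _ _) \<longleftrightarrow> False"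

definition less_w2p1 :: "w2p1 \<Rightarrow> w2p1 \<Rightarrow> bool" where
  "less_w2p1 x y \<longleftrightarrow> x \<le> y \<and> \<not> y \<le> x"

instance
proof
  fix x y z :: w2p1
  show "x < y \<longleftrightarrow> x \<le> y \<and> \<not> y \<le> x" by (simp add: less_w2p1_def)
  show "x \<le> x" by (cases x) auto
  show "x \<le> y \<Longrightarrow> y \<le> z \<Longrightarrow> x \<le> z" by (cases x; cases y; cases z) auto
  show "x \<le> y \<Longrightarrow> y \<le> x \<Longrightarrow> x = y" by (cases x; cases y) auto
  show "x \<le> y \<or> y \<le> x" by (cases x; cases y) auto
qed

end

instantiation w2p1 :: order_topology
begin

definition open_w2p1 :: "w2p1 set \<Rightarrow> bool" where
  "open_w2p1 = generate_topology (range lessThan \<union> range greaterThan)"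

instance by standard (simp add: open_w2p1_def)

end

abbreviation omega2p1_top :: "w2p1 topology" where
  "omega2p1_top \<equiv> (euclidean :: w2p1 topology)"

end

theory Submission
  imports Defs
begin

text \<open>
  Suppose a sequence \<open>x\<close> in \<open>\<omega>\<^sup>2+1\<close> has no \<open>I\<close>-positive convergent subsequence. Reading
  \<open>x n = \<omega>\<cdot>i + j\<close> as putting \<open>n\<close> into the cell \<open>(i, j)\<close>, every cell is in \<open>I\<close> (constant
  subsequences), every subset of the \<open>i\<close>-th slice meeting each cell finitely is in \<open>I\<close> (it
  converges to \<open>\<omega>\<cdot>(i+1)\<close>), and every set meeting each slice finitely is in \<open>I\<close> (it converges
  to \<open>\<omega>\<^sup>2\<close>). Merging slices and cells into finite blocks preserves these three properties and
  makes all cells infinite: directly if infinitely many slices are \<open>I\<close>-positive, and otherwise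
  after folding everything into a single slice and unfolding it again with a pairing function.
  Enumerating each infinite cell then yields a bijection from \<open>X\<close> onto \<open>\<omega>\<^sup>3\<close> pulling \<open>BI\<close> back
  into \<open>I\<close>: \<open>BI \<sqsubseteq> I\<close>, contradicting that \<open>I\<close> is unboring.
\<close>

instance w2p1 :: linorder_topology ..

lemma Pt_less_Pt_iff [simp]: "Pt a b < Pt c d \<longleftrightarrow> a < c \<or> (a = c \<and> b < d)"
  by (auto simp: less_w2p1_def)

lemma Pt_less_Top [simp]: "Pt a b < Top"
  by (simp add: less_w2p1_def)

lemma not_Top_less [simp]: "\<not> Top < p"
  by (cases p) (auto simp: less_w2p1_def)

fun coords :: "w2p1 \<Rightarrow> nat \<times> nat" where
  "coords (Pt i j) = (i, j)"
| "coords Top = (0, 0)"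

lemma coords_eq_iff: "coords p = (i, j) \<longleftrightarrow> p = Pt i j \<or> (p = Top \<and> i = 0 \<and> j = 0)"
  by (cases p) auto

lemma fst_coords_eq_iff: "fst (coords p) = i \<longleftrightarrow> (\<exists>j. p = Pt i j) \<or> (p = Top \<and> i = 0)"
  by (cases p) auto

lemma Hausdorff_space_euclidean_t2_space: "Hausdorff_space (euclidean :: 'a::t2_space topology)"
  unfolding Hausdorff_space_def using hausdorff by (auto simp: disjnt_def)

lemma converges_on_const:
  assumes "L \<in> topspace T"
  shows "converges_on T x {n\<in>A. x n = L} L"
  using assms by (auto simp: converges_on_def intro: finite_subset[of _ "{}"])

lemma converges_on_from_below:
  fixes x :: "'a \<Rightarrow> 'b::linorder_topology"
  assumes "y < L" and "\<And>n. n \<in> A \<Longrightarrow> x n \<le> L"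
    and "\<And>b. b < L \<Longrightarrow> finite {n\<in>A. x n \<le> b}"
  shows "converges_on euclidean x A L"
  unfolding converges_on_def
proof (intro conjI allI impI)
  fix U assume "openin euclidean U" "L \<in> U"
  then obtain b where "b < L" "{b<..L} \<subseteq> U"
    using open_left[of U L y] \<open>y < L\<close> by auto
  then have "{n\<in>A. x n \<notin> U} \<subseteq> {n\<in>A. x n \<le> b}"
    using assms(2) by (auto simp: subset_iff not_le)
  then show "finite {n\<in>A. x n \<notin> U}"
    using assms(3)[OF \<open>b < L\<close>] by (rule finite_subset)
qed simp

text \<open>For infinite \<open>S\<close> this cuts \<open>\<nat>\<close> into finite blocks, the \<open>k\<close>-th one ending at \<open>enumerate S k\<close>.\<close>
definition block_index :: "nat set \<Rightarrow> nat \<Rightarrow> nat" where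
  "block_index S i = (LEAST k. i \<le> enumerate S k)"

lemma le_enumerate_block_index: "infinite S \<Longrightarrow> i \<le> enumerate S (block_index S i)"
  unfolding block_index_def by (rule LeastI[of _ i]) (rule le_enumerate)

lemma block_index_enumerate: "infinite S \<Longrightarrow> block_index S (enumerate S k) = k"
  unfolding block_index_def
  by (rule Least_equality) (auto simp: not_less[symmetric] enumerate_mono)

lemma finite_block_index_fibre: "infinite S \<Longrightarrow> finite {i. block_index S i = k}"
  by (rule finite_subset[of _ "{..enumerate S k}"]) (auto dest: le_enumerate_block_index[of S])

lemma bij_betw_fibre_index:
  assumes "countable X" and "\<And>y. infinite {n\<in>X. s n = y}"
  shows "bij_betw (\<lambda>n. (s n, to_nat_on {m\<in>X. s m = s n} n)) X UNIV"
proof (rule bij_betwI')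
  fix n m assume "n \<in> X" "m \<in> X"
  moreover have "inj_on (to_nat_on {k\<in>X. s k = s m}) {k\<in>X. s k = s m}"
    using \<open>countable X\<close> by (intro inj_on_to_nat_on) auto
  ultimately show "((s n, to_nat_on {k\<in>X. s k = s n} n) = (s m, to_nat_on {k\<in>X. s k = s m} m))
      \<longleftrightarrow> n = m"
    by (auto simp: inj_on_def)
next
  fix p :: "'b \<times> nat"
  obtain y l where p: "p = (y, l)" by fastforce
  have "countable {n\<in>X. s n = y}"
    using \<open>countable X\<close> by auto
  then obtain n where "n \<in> {n\<in>X. s n = y}" "to_nat_on {n\<in>X. s n = y} n = l"
    using to_nat_on_surj assms(2) by blast
  then show "\<exists>n\<in>X. p = (s n, to_nat_on {m\<in>X. s m = s n} n)"
    using p by auto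
qed simp

lemma Union_BI: "\<Union>BI = UNIV"
proof -
  have "{(i, j, l)} \<in> BI" for i j l
    unfolding BI_def by (auto intro!: exI[of _ 0] finite_subset[of _ "{(j, l)}"])
  then show ?thesis by auto
qed

definition slice :: "'a set \<Rightarrow> ('a \<Rightarrow> nat \<times> nat) \<Rightarrow> nat \<Rightarrow> 'a set" where
  "slice X s i = {n\<in>X. fst (s n) = i}"

definition cell :: "'a set \<Rightarrow> ('a \<Rightarrow> nat \<times> nat) \<Rightarrow> nat \<Rightarrow> nat \<Rightarrow> 'a set" where
  "cell X s i j = {n\<in>X. s n = (i, j)}"

text \<open>
  With the cell \<open>(i, j)\<close> read as the point \<open>\<omega>\<cdot>i + j\<close> of \<open>\<omega>\<^sup>2\<close>, the three clauses say that \<open>I\<close>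
  contains the index sets of the constant subsequences and of the subsequences converging
  to \<open>\<omega>\<cdot>(i+1)\<close> and to \<open>\<omega>\<^sup>2\<close>.
\<close>
definition BI_pattern :: "'a set \<Rightarrow> 'a set set \<Rightarrow> ('a \<Rightarrow> nat \<times> nat) \<Rightarrow> bool" where
  "BI_pattern X I s \<longleftrightarrow> (\<forall>i j. cell X s i j \<in> I)
     \<and> (\<forall>i E. E \<subseteq> slice X s i \<longrightarrow> (\<forall>j. finite (E \<inter> cell X s i j)) \<longrightarrow> E \<in> I)
     \<and> (\<forall>E. E \<subseteq> X \<longrightarrow> (\<forall>i. finite (E \<inter> slice X s i)) \<longrightarrow> E \<in> I)"

lemma BI_patternI:
  assumes "\<And>i j. cell X s i j \<in> I"
    and "\<And>i E. E \<subseteq> slice X s i \<Longrightarrow> (\<And>j. finite (E \<inter> cell X s i j)) \<Longrightarrow> E \<in> I"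
    and "\<And>E. E \<subseteq> X \<Longrightarrow> (\<And>i. finite (E \<inter> slice X s i)) \<Longrightarrow> E \<in> I"
  shows "BI_pattern X I s"
  using assms by (auto simp: BI_pattern_def)

lemma BI_pattern_cell_in_ideal: "BI_pattern X I s \<Longrightarrow> cell X s i j \<in> I"
  by (simp add: BI_pattern_def)

lemma BI_pattern_within_slice:
  "BI_pattern X I s \<Longrightarrow> E \<subseteq> slice X s i \<Longrightarrow> (\<And>j. finite (E \<inter> cell X s i j)) \<Longrightarrow> E \<in> I"
  by (simp add: BI_pattern_def)

lemma BI_pattern_across_slices:
  "BI_pattern X I s \<Longrightarrow> E \<subseteq> X \<Longrightarrow> (\<And>i. finite (E \<inter> slice X s i)) \<Longrightarrow> E \<in> I"
  by (simp add: BI_pattern_def)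

lemma converges_on_slice_limit:
  fixes x :: "'a \<Rightarrow> w2p1"
  assumes E: "E \<subseteq> slice X (coords \<circ> x) i"
    and finite_cells: "\<And>j. finite (E \<inter> cell X (coords \<circ> x) i j)"
  shows "converges_on euclidean x {n\<in>E. x n \<noteq> Top} (Pt (Suc i) 0)"
proof (rule converges_on_from_below)
  show "Pt i 0 < Pt (Suc i) 0" by simp
  show "x n \<le> Pt (Suc i) 0" if "n \<in> {n\<in>E. x n \<noteq> Top}" for n
    using that E by (auto simp: slice_def fst_coords_eq_iff)
  fix b assume "b < Pt (Suc i) 0"
  moreover obtain c d where "b = Pt c d"
    using \<open>b < Pt (Suc i) 0\<close> by (cases b) auto
  ultimately have "{n\<in>{n\<in>E. x n \<noteq> Top}. x n \<le> b} \<subseteq> (\<Union>j\<le>d. E \<inter> cell X (coords \<circ> x) i j)"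
    using E by (auto simp: slice_def cell_def fst_coords_eq_iff)
  then show "finite {n\<in>{n\<in>E. x n \<noteq> Top}. x n \<le> b}"
    by (rule finite_subset) (intro finite_UN_I finite_atMost finite_cells)
qed

lemma converges_on_Top:
  fixes x :: "'a \<Rightarrow> w2p1"
  assumes "E \<subseteq> X" and finite_slices: "\<And>i. finite (E \<inter> slice X (coords \<circ> x) i)"
  shows "converges_on euclidean x {n\<in>E. x n \<noteq> Top} Top"
proof (rule converges_on_from_below)
  show "Pt 0 0 < Top" by simp
  fix b assume "b < Top"
  then obtain c d where "b = Pt c d"
    by (cases b) auto
  have "{n\<in>{n\<in>E. x n \<noteq> Top}. x n \<le> b} \<subseteq> (\<Union>i\<le>c. E \<inter> slice X (coords \<circ> x) i)"
  proof
    fix n assume n: "n \<in> {n\<in>{n\<in>E. x n \<noteq> Top}. x n \<le> b}"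
    then obtain i j where "x n = Pt i j"
      by (cases "x n") auto
    with n \<open>b = Pt c d\<close> \<open>E \<subseteq> X\<close> show "n \<in> (\<Union>i\<le>c. E \<inter> slice X (coords \<circ> x) i)"
      by (auto simp: slice_def)
  qed
  then show "finite {n\<in>{n\<in>E. x n \<noteq> Top}. x n \<le> b}"
    by (rule finite_subset) (intro finite_UN_I finite_atMost finite_slices)
qed simp

definition address :: "('a \<Rightarrow> nat \<times> nat) \<Rightarrow> ('a \<Rightarrow> nat) \<Rightarrow> 'a \<Rightarrow> nat \<times> nat \<times> nat" where
  "address s e n = (fst (s n), snd (s n), e n)"

lemma finite_vimage_address:
  "inj_on (address s e) X \<Longrightarrow> finite F \<Longrightarrow> finite {n\<in>X. address s e n \<in> F}"
  using finite_vimage_IntI[of F "address s e" X] by (simp add: vimage_def Int_def conj_commute)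

locale countable_ideal =
  fixes X :: "'a set" and I :: "'a set set"
  assumes ideal_on: "ideal_on X I"
begin

lemma ideal_subset: "A \<in> I \<Longrightarrow> B \<subseteq> A \<Longrightarrow> B \<in> I"
  using ideal_on unfolding ideal_on_def by blast

lemma ideal_Un: "A \<in> I \<Longrightarrow> B \<in> I \<Longrightarrow> A \<union> B \<in> I"
  using ideal_on unfolding ideal_on_def by blast

lemma ideal_subset_Un: "C \<subseteq> A \<union> B \<Longrightarrow> A \<in> I \<Longrightarrow> B \<in> I \<Longrightarrow> C \<in> I"
  by (meson ideal_Un ideal_subset)

lemma finite_in_ideal: "finite F \<Longrightarrow> F \<subseteq> X \<Longrightarrow> F \<in> I"
  using ideal_on unfolding ideal_on_def by blast

lemma carrier_notin_ideal: "X \<notin> I"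
  using ideal_on unfolding ideal_on_def by blast

lemma countable_carrier: "countable X"
  using ideal_on unfolding ideal_on_def by blast

lemma Union_ideal: "\<Union>I = X"
proof
  show "\<Union>I \<subseteq> X"
    using ideal_on unfolding ideal_on_def by blast
  show "X \<subseteq> \<Union>I"
    using finite_in_ideal[of "{x}" for x] by blast
qed

lemma empty_in_ideal: "{} \<in> I"
  using finite_in_ideal by auto

lemma ideal_UN: "finite K \<Longrightarrow> (\<And>k. k \<in> K \<Longrightarrow> A k \<in> I) \<Longrightarrow> (\<Union>k\<in>K. A k) \<in> I"
  by (induction K rule: finite_induct) (auto intro: ideal_Un empty_in_ideal)

lemma BI_pattern_coords_if_convergent_in_ideal:
  fixes x :: "'a \<Rightarrow> w2p1"
  assumes convergent_in_ideal: "\<And>A L. A \<subseteq> X \<Longrightarrow> converges_on euclidean x A L \<Longrightarrow> A \<in> I"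
  shows "BI_pattern X I (coords \<circ> x)"
proof -
  have fibre: "{n\<in>X. x n = p} \<in> I" for p
    by (rule convergent_in_ideal) (auto intro: converges_on_const)
  have in_ideal_if_converges_off_Top: "E \<in> I"
    if "E \<subseteq> X" and "converges_on euclidean x {n\<in>E. x n \<noteq> Top} L" for E L
  proof (rule ideal_subset_Un)
    show "E \<subseteq> {n\<in>E. x n \<noteq> Top} \<union> {n\<in>X. x n = Top}"
      using \<open>E \<subseteq> X\<close> by auto
    show "{n\<in>E. x n \<noteq> Top} \<in> I"
      using that by (intro convergent_in_ideal) auto
  qed (rule fibre)
  show ?thesis
  proof (rule BI_patternI)
    fix i j
    have "cell X (coords \<circ> x) i j \<subseteq> {n\<in>X. x n = Pt i j} \<union> {n\<in>X. x n = Top}"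
      by (auto simp: cell_def coords_eq_iff)
    then show "cell X (coords \<circ> x) i j \<in> I"
      by (rule ideal_subset_Un[OF _ fibre fibre])
  next
    fix i E assume E: "E \<subseteq> slice X (coords \<circ> x) i"
      and "\<And>j. finite (E \<inter> cell X (coords \<circ> x) i j)"
    then have "converges_on euclidean x {n\<in>E. x n \<noteq> Top} (Pt (Suc i) 0)"
      by (rule converges_on_slice_limit)
    moreover have "E \<subseteq> X"
      using E by (auto simp: slice_def)
    ultimately show "E \<in> I"
      by (intro in_ideal_if_converges_off_Top)
  next
    fix E assume "E \<subseteq> X" "\<And>i. finite (E \<inter> slice X (coords \<circ> x) i)"
    then have "converges_on euclidean x {n\<in>E. x n \<noteq> Top} Top"
      by (rule converges_on_Top)
    with \<open>E \<subseteq> X\<close> show "E \<in> I"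
      by (rule in_ideal_if_converges_off_Top)
  qed
qed

lemma BI_pattern_coarsen:
  assumes pattern: "BI_pattern X I s"
    and finite_g: "\<And>k. finite {i. g i = k}" and finite_h: "\<And>i m. finite {j. h i j = m}"
  shows "BI_pattern X I (\<lambda>n. (g (fst (s n)), h (fst (s n)) (snd (s n))))"
    (is "BI_pattern X I ?s")
proof (rule BI_patternI)
  fix k m
  have "cell X ?s k m \<subseteq> (\<Union>i\<in>{i. g i = k}. \<Union>j\<in>{j. h i j = m}. cell X s i j)"
    by (auto simp: cell_def prod_eq_iff)
  moreover have "(\<Union>i\<in>{i. g i = k}. \<Union>j\<in>{j. h i j = m}. cell X s i j) \<in> I"
    by (intro ideal_UN finite_g finite_h BI_pattern_cell_in_ideal[OF pattern])
  ultimately show "cell X ?s k m \<in> I"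
    by (rule ideal_subset[rotated])
next
  fix k E assume E: "E \<subseteq> slice X ?s k" and finite_cells: "\<And>m. finite (E \<inter> cell X ?s k m)"
  have "E \<inter> slice X s i \<in> I" if "g i = k" for i
  proof (rule BI_pattern_within_slice[OF pattern])
    fix j
    have "E \<inter> slice X s i \<inter> cell X s i j \<subseteq> E \<inter> cell X ?s k (h i j)"
      using that by (auto simp: cell_def slice_def prod_eq_iff)
    then show "finite (E \<inter> slice X s i \<inter> cell X s i j)"
      using finite_cells by (rule finite_subset)
  qed auto
  then have "(\<Union>i\<in>{i. g i = k}. E \<inter> slice X s i) \<in> I"
    by (intro ideal_UN finite_g) auto
  moreover have "E \<subseteq> (\<Union>i\<in>{i. g i = k}. E \<inter> slice X s i)"
    using E by (auto simp: slice_def)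
  ultimately show "E \<in> I"
    by (rule ideal_subset)
next
  fix E assume E: "E \<subseteq> X" and finite_slices: "\<And>k. finite (E \<inter> slice X ?s k)"
  show "E \<in> I"
  proof (rule BI_pattern_across_slices[OF pattern E])
    fix i
    have "E \<inter> slice X s i \<subseteq> E \<inter> slice X ?s (g i)"
      by (auto simp: slice_def)
    then show "finite (E \<inter> slice X s i)"
      using finite_slices by (rule finite_subset)
  qed
qed

lemma BI_pattern_merge_slices:
  assumes pattern: "BI_pattern X I s" and infinite_positive: "infinite {i. slice X s i \<notin> I}"
  obtains s' where "BI_pattern X I s'" and "\<And>k. slice X s' k \<notin> I"
proof
  let ?N = "{i. slice X s i \<notin> I}"
  let ?s = "\<lambda>n. (block_index ?N (fst (s n)), snd (s n))"
  show "BI_pattern X I ?s"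
    using BI_pattern_coarsen[OF pattern, of "block_index ?N" "\<lambda>i j. j"]
    by (simp add: finite_block_index_fibre[OF infinite_positive])
  fix k
  have "slice X s (enumerate ?N k) \<subseteq> slice X ?s k"
    using block_index_enumerate[OF infinite_positive, of k] by (auto simp: slice_def)
  moreover have "slice X s (enumerate ?N k) \<notin> I"
    using enumerate_in_set[OF infinite_positive] by blast
  ultimately show "slice X ?s k \<notin> I"
    using ideal_subset by blast
qed

lemma positive_slice_has_infinitely_many_infinite_cells:
  assumes pattern: "BI_pattern X I s" and positive: "slice X s i \<notin> I"
  shows "infinite {j. infinite (cell X s i j)}"
proof
  let ?J = "{j. infinite (cell X s i j)}"
  assume "finite ?J"
  then have "(\<Union>j\<in>?J. cell X s i j) \<in> I"
    by (intro ideal_UN BI_pattern_cell_in_ideal[OF pattern])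
  moreover have "{n\<in>slice X s i. snd (s n) \<notin> ?J} \<in> I"
  proof (rule BI_pattern_within_slice[OF pattern])
    fix j
    show "finite ({n\<in>slice X s i. snd (s n) \<notin> ?J} \<inter> cell X s i j)"
    proof (cases "j \<in> ?J")
      case True
      then have "{n\<in>slice X s i. snd (s n) \<notin> ?J} \<inter> cell X s i j = {}"
        by (auto simp: cell_def)
      then show ?thesis by simp
    next
      case False
      then show ?thesis by (auto intro: finite_subset[of _ "cell X s i j"])
    qed
  qed auto
  moreover have "slice X s i \<subseteq> (\<Union>j\<in>?J. cell X s i j) \<union> {n\<in>slice X s i. snd (s n) \<notin> ?J}"
    by (auto simp: slice_def cell_def prod_eq_iff)
  ultimately show False
    using positive ideal_subset_Un by blast
qed

lemma BI_pattern_merge_cells: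
  assumes pattern: "BI_pattern X I s"
  obtains s' where "BI_pattern X I s'" and "\<And>i. slice X s' i = slice X s i"
    and "\<And>i j. slice X s i \<notin> I \<Longrightarrow> infinite (cell X s' i j)"
proof
  define J where "J i = {j. infinite (cell X s i j)}" for i
  define h where "h i j = (if infinite (J i) then block_index (J i) j else j)" for i j
  let ?s = "\<lambda>n. (fst (s n), h (fst (s n)) (snd (s n)))"
  have "finite {j. h i j = m}" for i m
    by (cases "infinite (J i)") (auto simp: h_def finite_block_index_fibre)
  then show "BI_pattern X I ?s"
    using BI_pattern_coarsen[OF pattern, of "\<lambda>i. i" h] by simp
  show "slice X ?s i = slice X s i" for i
    by (simp add: slice_def)
  fix i j assume "slice X s i \<notin> I"
  then have infinite_J: "infinite (J i)"
    unfolding J_def by (rule positive_slice_has_infinitely_many_infinite_cells[OF pattern])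
  then have "infinite (cell X s i (enumerate (J i) j))"
    using enumerate_in_set[OF infinite_J] by (simp add: J_def)
  moreover have "cell X s i (enumerate (J i) j) \<subseteq> cell X ?s i j"
    by (auto simp: cell_def h_def infinite_J block_index_enumerate)
  ultimately show "infinite (cell X ?s i j)"
    using finite_subset by blast
qed

lemma BI_pattern_collapse_slices:
  assumes pattern: "BI_pattern X I s" and null: "\<And>i. i \<notin> N \<Longrightarrow> slice X s i \<in> I"
  shows "BI_pattern X I (\<lambda>n. (fst (s n), if fst (s n) \<in> N then snd (s n) else 0))"
    (is "BI_pattern X I ?s")
proof (rule BI_patternI)
  have same_slices: "slice X ?s i = slice X s i" for i
    by (simp add: slice_def)
  have same_cells: "cell X ?s i j = cell X s i j" if "i \<in> N" for i j
    using that by (auto simp: cell_def prod_eq_iff)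
  have cell_in_slice: "cell X ?s i j \<subseteq> slice X s i" for i j
    by (auto simp: cell_def slice_def)
  fix i
  show "cell X ?s i j \<in> I" for j
    using same_cells BI_pattern_cell_in_ideal[OF pattern] ideal_subset[OF null cell_in_slice]
    by (cases "i \<in> N") auto
  fix E assume E: "E \<subseteq> slice X ?s i" and finite_cells: "\<And>j. finite (E \<inter> cell X ?s i j)"
  show "E \<in> I"
  proof (cases "i \<in> N")
    case True
    with E finite_cells show ?thesis
      by (intro BI_pattern_within_slice[OF pattern]) (simp_all add: same_slices same_cells)
  next
    case False
    with E show ?thesis
      using ideal_subset[OF null] by (simp add: same_slices)
  qed
next
  fix E assume "E \<subseteq> X" and "\<And>i. finite (E \<inter> slice X ?s i)"
  then show "E \<in> I"
    by (intro BI_pattern_across_slices[OF pattern]) (auto simp: slice_def)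
qed

lemma BI_pattern_single_slice:
  assumes pattern: "BI_pattern X I s" and "finite N"
    and trivial_slices: "\<And>i. i \<notin> N \<Longrightarrow> slice X s i \<subseteq> cell X s i 0"
  shows "BI_pattern X I (\<lambda>n. (0, prod_encode (s n)))"
    (is "BI_pattern X I ?s")
proof (rule BI_patternI)
  fix k m
  have "cell X ?s k m \<subseteq> cell X s (fst (prod_decode m)) (snd (prod_decode m))"
    by (auto simp: cell_def)
  then show "cell X ?s k m \<in> I"
    by (rule ideal_subset[OF BI_pattern_cell_in_ideal[OF pattern]])
next
  fix k E assume E: "E \<subseteq> slice X ?s k" and finite_cells: "\<And>m. finite (E \<inter> cell X ?s k m)"
  then have "E \<subseteq> X"
    by (auto simp: slice_def)
  have finite_old_cells: "finite (E \<inter> cell X s i j)" for i j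
  proof (rule finite_subset)
    show "E \<inter> cell X s i j \<subseteq> E \<inter> cell X ?s k (prod_encode (i, j))"
      using E by (auto simp: slice_def cell_def)
  qed (rule finite_cells)
  have "(\<Union>i\<in>N. E \<inter> slice X s i) \<in> I"
    using \<open>finite N\<close> finite_old_cells
    by (intro ideal_UN BI_pattern_within_slice[OF pattern]) (auto intro: finite_subset[rotated])
  moreover have "{n\<in>E. fst (s n) \<notin> N} \<in> I"
  proof (rule BI_pattern_across_slices[OF pattern])
    fix i
    have "{n\<in>E. fst (s n) \<notin> N} \<inter> slice X s i \<subseteq> E \<inter> cell X s i 0"
      using trivial_slices by (cases "i \<in> N") (auto simp: slice_def)
    then show "finite ({n\<in>E. fst (s n) \<notin> N} \<inter> slice X s i)"
      using finite_old_cells by (rule finite_subset)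
  qed (use \<open>E \<subseteq> X\<close> in auto)
  moreover have "E \<subseteq> (\<Union>i\<in>N. E \<inter> slice X s i) \<union> {n\<in>E. fst (s n) \<notin> N}"
    using \<open>E \<subseteq> X\<close> by (auto simp: slice_def)
  ultimately show "E \<in> I"
    using ideal_subset_Un by blast
next
  fix E assume "E \<subseteq> X" and finite_slices: "\<And>i. finite (E \<inter> slice X ?s i)"
  have "E \<inter> slice X ?s 0 = E"
    using \<open>E \<subseteq> X\<close> by (auto simp: slice_def)
  then have "finite E"
    using finite_slices[of 0] by simp
  then show "E \<in> I"
    using \<open>E \<subseteq> X\<close> by (rule finite_in_ideal)
qed

lemma BI_pattern_split_slice:
  assumes pattern: "BI_pattern X I s" and single: "slice X s 0 = X"
    and infinite_cells: "\<And>j. infinite (cell X s 0 j)"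
  obtains s' where "BI_pattern X I s'" and "\<And>i j. infinite (cell X s' i j)"
proof
  let ?s = "\<lambda>n. prod_decode (snd (s n))"
  have cell_s: "cell X ?s i j = cell X s 0 (prod_encode (i, j))" for i j
    using single by (auto simp: cell_def slice_def prod_eq_iff)
  show "infinite (cell X ?s i j)" for i j
    by (simp add: cell_s infinite_cells)
  show "BI_pattern X I ?s"
  proof (rule BI_patternI)
    show "cell X ?s i j \<in> I" for i j
      by (simp add: cell_s BI_pattern_cell_in_ideal[OF pattern])
  next
    fix i E assume E: "E \<subseteq> slice X ?s i" and finite_cells: "\<And>j. finite (E \<inter> cell X ?s i j)"
    show "E \<in> I"
    proof (rule BI_pattern_within_slice[OF pattern])
      show "E \<subseteq> slice X s 0"
        using E single by (auto simp: slice_def)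
      fix m
      have "E \<inter> cell X s 0 m \<subseteq> E \<inter> cell X ?s i (snd (prod_decode m))"
        using E by (auto simp: slice_def cell_def)
      then show "finite (E \<inter> cell X s 0 m)"
        using finite_cells by (rule finite_subset)
    qed
  next
    fix E assume "E \<subseteq> X" and finite_slices: "\<And>i. finite (E \<inter> slice X ?s i)"
    show "E \<in> I"
    proof (rule BI_pattern_within_slice[OF pattern])
      show "E \<subseteq> slice X s 0"
        using \<open>E \<subseteq> X\<close> single by simp
      fix m
      have "E \<inter> cell X s 0 m \<subseteq> E \<inter> slice X ?s (fst (prod_decode m))"
        by (auto simp: cell_def slice_def)
      then show "finite (E \<inter> cell X s 0 m)"
        using finite_slices by (rule finite_subset)
    qed
  qed
qed

lemma infinite_cells_if_finitely_many_positive_slices: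
  assumes pattern: "BI_pattern X I s" and finite_positive: "finite {i. slice X s i \<notin> I}"
  obtains s' where "BI_pattern X I s'" and "\<And>i j. infinite (cell X s' i j)"
proof -
  define N where "N = {i. slice X s i \<notin> I}"
  \<comment> \<open>Shrinking each null slice to a single cell leaves only finitely many slices with
    structure, which is what stacking all slices into one needs.\<close>
  define s0 where "s0 = (\<lambda>n. (fst (s n), if fst (s n) \<in> N then snd (s n) else 0))"
  define s1 where "s1 = (\<lambda>n. (0::nat, prod_encode (s0 n)))"
  have "BI_pattern X I s0"
    unfolding s0_def by (rule BI_pattern_collapse_slices[OF pattern]) (simp add: N_def)
  then have s1: "BI_pattern X I s1"
    unfolding s1_def using finite_positive[folded N_def]
    by (rule BI_pattern_single_slice[where N = N]) (auto simp: N_def s0_def slice_def cell_def)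
  have single: "slice X s1 0 = X"
    by (simp add: s1_def slice_def)
  obtain s2 where s2: "BI_pattern X I s2" "\<And>i. slice X s2 i = slice X s1 i"
    "\<And>i j. slice X s1 i \<notin> I \<Longrightarrow> infinite (cell X s2 i j)"
    by (rule BI_pattern_merge_cells[OF s1]) (rule that)
  have "slice X s2 0 = X" and "infinite (cell X s2 0 j)" for j
    using single s2(2,3) carrier_notin_ideal by simp_all
  then show ?thesis
    using BI_pattern_split_slice[OF s2(1)] that by blast
qed

lemma infinite_cells_if_infinitely_many_positive_slices:
  assumes pattern: "BI_pattern X I s" and infinite_positive: "infinite {i. slice X s i \<notin> I}"
  obtains s' where "BI_pattern X I s'" and "\<And>i j. infinite (cell X s' i j)"
proof -
  obtain s1 where s1: "BI_pattern X I s1" "\<And>i. slice X s1 i \<notin> I"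
    by (rule BI_pattern_merge_slices[OF pattern infinite_positive]) (rule that)
  obtain s2 where "BI_pattern X I s2" "\<And>i j. slice X s1 i \<notin> I \<Longrightarrow> infinite (cell X s2 i j)"
    by (rule BI_pattern_merge_cells[OF s1(1)]) (rule that)
  then show ?thesis
    using s1(2) that by blast
qed

context
  fixes s :: "'a \<Rightarrow> nat \<times> nat" and e :: "'a \<Rightarrow> nat"
  assumes pattern: "BI_pattern X I s" and inj: "inj_on (address s e) X"
begin

lemma vimage_finite_lines_in_ideal:
  assumes "\<And>j. finite {l. (i, j, l) \<in> B}"
  shows "{n\<in>X. address s e n \<in> B \<and> fst (s n) = i} \<in> I"
proof (rule BI_pattern_within_slice[OF pattern])
  fix j
  have "finite {n\<in>X. address s e n \<in> Pair i ` Pair j ` {l. (i, j, l) \<in> B}}"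
    using assms by (intro finite_vimage_address inj) simp
  then show "finite ({n\<in>X. address s e n \<in> B \<and> fst (s n) = i} \<inter> cell X s i j)"
    by (rule finite_subset[rotated]) (auto simp: address_def cell_def prod_eq_iff)
qed (auto simp: slice_def)

lemma vimage_finite_slices_in_ideal:
  assumes "\<And>i. finite {(j, l). (i, j, l) \<in> B}"
  shows "{n\<in>X. address s e n \<in> B} \<in> I"
proof (rule BI_pattern_across_slices[OF pattern])
  fix i
  have "finite {n\<in>X. address s e n \<in> Pair i ` {(j, l). (i, j, l) \<in> B}}"
    using assms by (intro finite_vimage_address inj) simp
  then show "finite ({n\<in>X. address s e n \<in> B} \<inter> slice X s i)"
    by (rule finite_subset[rotated]) (auto simp: address_def slice_def)
qed auto

lemma vimage_BI_in_ideal: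
  assumes "B \<in> BI"
  shows "{n\<in>X. address s e n \<in> B} \<in> I"
proof -
  obtain k where below_k: "\<And>i. i < k \<Longrightarrow> {(j, l). (i, j, l) \<in> B} \<in> Fin2"
    and above_k: "\<And>i. k \<le> i \<Longrightarrow> finite {(j, l). (i, j, l) \<in> B}"
    using assms unfolding BI_def by blast
  define J where "J i = {j. infinite {l. (i, j, l) \<in> B}}" for i
  define B_thin where "B_thin i = {p\<in>B. fst (snd p) \<notin> J i}" for i
  define B_high where "B_high = {p\<in>B. k \<le> fst p}"
  have "(\<Union>i<k. \<Union>j\<in>J i. cell X s i j) \<in> I"
    using below_k by (intro ideal_UN) (auto simp: J_def Fin2_def BI_pattern_cell_in_ideal[OF pattern])
  moreover have "(\<Union>i<k. {n\<in>X. address s e n \<in> B_thin i \<and> fst (s n) = i}) \<in> I"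
    by (intro ideal_UN vimage_finite_lines_in_ideal) (auto simp: B_thin_def J_def)
  moreover have "{n\<in>X. address s e n \<in> B_high} \<in> I"
  proof (rule vimage_finite_slices_in_ideal)
    show "finite {(j, l). (i, j, l) \<in> B_high}" for i
      using above_k[of i] by (cases "k \<le> i") (auto simp: B_high_def)
  qed
  moreover have "{n\<in>X. address s e n \<in> B} \<subseteq> ((\<Union>i<k. \<Union>j\<in>J i. cell X s i j)
      \<union> (\<Union>i<k. {n\<in>X. address s e n \<in> B_thin i \<and> fst (s n) = i})) \<union> {n\<in>X. address s e n \<in> B_high}"
  proof
    fix n assume n: "n \<in> {n\<in>X. address s e n \<in> B}"
    then have "n \<in> cell X s (fst (s n)) (snd (s n))"
      by (simp add: cell_def)
    with n show "n \<in> ((\<Union>i<k. \<Union>j\<in>J i. cell X s i j)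
        \<union> (\<Union>i<k. {n\<in>X. address s e n \<in> B_thin i \<and> fst (s n) = i})) \<union> {n\<in>X. address s e n \<in> B_high}"
      by (cases "k \<le> fst (s n)") (auto simp: address_def B_thin_def B_high_def)
  qed
  ultimately show ?thesis
    by (meson ideal_Un ideal_subset_Un)
qed

end

lemma ideal_below_BI_if_infinite_cells:
  assumes pattern: "BI_pattern X I s" and infinite_cells: "\<And>i j. infinite (cell X s i j)"
  shows "ideal_below BI I"
proof -
  define e where "e n = to_nat_on {m\<in>X. s m = s n} n" for n
  have "bij_betw (\<lambda>n. (s n, e n)) X UNIV"
    unfolding e_def using countable_carrier infinite_cells
    by (intro bij_betw_fibre_index) (auto simp: cell_def)
  moreover have "bij_betw (\<lambda>((i, j), l). (i, j, l :: nat)) UNIV UNIV"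
    by (rule bij_betwI[of _ _ _ "\<lambda>(i, j, l). ((i, j), l)"]) auto
  ultimately have "bij_betw ((\<lambda>((i, j), l). (i, j, l)) \<circ> (\<lambda>n. (s n, e n))) X UNIV"
    by (rule bij_betw_trans)
  then have bij: "bij_betw (address s e) X UNIV"
    by (simp add: address_def[abs_def] comp_def case_prod_beta)
  have "address s e -` B \<inter> X \<in> I" if "B \<in> BI" for B
    using vimage_BI_in_ideal[OF pattern bij_betw_imp_inj_on[OF bij] that]
    by (simp add: vimage_def Int_def conj_commute)
  then show ?thesis
    unfolding ideal_below_def Union_BI Union_ideal using bij by blast
qed

lemma ideal_below_BI_if_BI_pattern:
  assumes pattern: "BI_pattern X I s"
  shows "ideal_below BI I"
proof -
  obtain s' where "BI_pattern X I s'" and "\<And>i j. infinite (cell X s' i j)"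
    using infinite_cells_if_finitely_many_positive_slices[OF pattern]
      infinite_cells_if_infinitely_many_positive_slices[OF pattern] by blast
  then show ?thesis
    by (rule ideal_below_BI_if_infinite_cells)
qed

end

theorem proposition6p2:
  fixes I :: "'a set set" and X :: "'a set"
  assumes "ideal_on X I"
    and "unboring I"
  shows "FinBW I omega2p1_top"
proof -
  interpret countable_ideal X I
    by (rule countable_ideal.intro) (rule assms(1))
  have "\<exists>A. A \<subseteq> \<Union>I \<and> A \<notin> I \<and> (\<exists>L. converges_on omega2p1_top x A L)" for x :: "'a \<Rightarrow> w2p1"
  proof (rule ccontr)
    assume no_positive_convergent: "\<not> ?thesis"
    have "BI_pattern X I (coords \<circ> x)"
    proof (rule BI_pattern_coords_if_convergent_in_ideal)
      fix A L assume "A \<subseteq> X" "converges_on euclidean x A L"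
      then show "A \<in> I"
        using no_positive_convergent Union_ideal by blast
    qed
    then have "ideal_below BI I"
      by (rule ideal_below_BI_if_BI_pattern)
    with \<open>unboring I\<close> show False
      by (simp add: unboring_def)
  qed
  then show ?thesis
    unfolding FinBW_def using Hausdorff_space_euclidean_t2_space by blast
qed

end
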